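(* Let $\tau$ be a Young diagram, $l>0$ an integer, $s\in C_\tau$, and $\mu=\Gamma(\tau,s,l)$. Then $|\mu|-|\tau|>0$ and $s=\frac{f(\mu)-f(\tau)}{|\mu|-|\tau|}$.
   Context: For a Young diagram $\lambda$, $|\lambda|$ is its number of cells, $\lambda'_j$ the length of its $j$-th column ($0$ if there is none), $ct(\lambda)=\sum_{(i,j)\in\lambda}(j-i)$, and $f(\lambda)=\frac{|\lambda|^2-|\lambda|}{2}+ct(\lambda)$. $C_\tau=\{|\tau|-1+j-\tau'_j: j\ge1\}$; for $s\in C_\tau$, $j_s$ is the unique $j\ge1$ with $s=|\tau|-1+j-\tau'_j$. $\mathbf{core}_{(\nu-s)}(\tau)$ is the diagram $\eta$ with $\eta'_j=\tau'_j+1$ for $1\le j<j_s$ and $\eta'_j=\tau'_{j+1}$ for $j\ge j_s$. For a diagram $\eta$ and integer $l\ge0$, $\mathbf{rec}(l,\eta)$ is the diagram $\lambda$ defined by taking $k\ge1$ with $\eta'_{k-1}\ge l+1>\eta'_k$ ($\eta'_0:=\infty$) and setting $\lambda'_j=\eta'_j-1$ for $j<k$, $\lambda'_k=l$, $\lambda'_j=\eta'_{j-1}$ for $j>k$. For $l\ge-\tau'_{j_s}$, $\Gamma(\tau,s,l):=\mathbf{rec}(\tau'_{j_s}+l,\mathbf{core}_{(\nu-s)}(\tau))$. *)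

theory Defs
  imports Complex_Main
begin

text \<open>A Young diagram is represented by its column lengths: c j is the length of the
  j-th column for j \<ge> 1 (the value at 0 is ignored). Column lengths are weakly
  decreasing and eventually zero.\<close>

definition young :: "(nat \<Rightarrow> nat) \<Rightarrow> bool" where
  "young c \<longleftrightarrow> (\<forall>j\<ge>1. c (Suc j) \<le> c j) \<and> (\<exists>N. \<forall>j>N. c j = 0)"

definition cells :: "(nat \<Rightarrow> nat) \<Rightarrow> (nat \<times> nat) set" where
  "cells c = {(i, j). 1 \<le> j \<and> 1 \<le> i \<and> i \<le> c j}"

definition ysize :: "(nat \<Rightarrow> nat) \<Rightarrow> nat" where
  "ysize c = card (cells c)"

definition content :: "(nat \<Rightarrow> nat) \<Rightarrow> int" where
  "content c = (\<Sum>(i, j)\<in>cells c. int j - int i)"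

definition fval :: "(nat \<Rightarrow> nat) \<Rightarrow> int" where
  "fval c = (int (ysize c) ^ 2 - int (ysize c)) div 2 + content c"

definition Cset :: "(nat \<Rightarrow> nat) \<Rightarrow> int set" where
  "Cset c = {int (ysize c) - 1 + int j - int (c j) | j. j \<ge> 1}"

definition jidx :: "(nat \<Rightarrow> nat) \<Rightarrow> int \<Rightarrow> nat" where
  "jidx c s = (THE j. j \<ge> 1 \<and> s = int (ysize c) - 1 + int j - int (c j))"

definition core :: "(nat \<Rightarrow> nat) \<Rightarrow> int \<Rightarrow> (nat \<Rightarrow> nat)" where
  "core c s = (\<lambda>j. if j = 0 then 0
                   else if j < jidx c s then c j + 1
                   else c (Suc j))"

text \<open>rec(l, eta); the convention eta'_0 = infinity is encoded by the disjunct k = 1.\<close>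
definition rec_idx :: "nat \<Rightarrow> (nat \<Rightarrow> nat) \<Rightarrow> nat" where
  "rec_idx l e = (THE k. k \<ge> 1 \<and> (k = 1 \<or> e (k - 1) \<ge> l + 1) \<and> l + 1 > e k)"

definition recd :: "nat \<Rightarrow> (nat \<Rightarrow> nat) \<Rightarrow> (nat \<Rightarrow> nat)" where
  "recd l e = (\<lambda>j. if j = 0 then 0
                   else if j < rec_idx l e then e j - 1
                   else if j = rec_idx l e then l
                   else e (j - 1))"

text \<open>Gamma(tau, s, l), for integers l \<ge> - tau'_{j_s}.\<close>
definition Gamma :: "(nat \<Rightarrow> nat) \<Rightarrow> int \<Rightarrow> int \<Rightarrow> (nat \<Rightarrow> nat)" where
  "Gamma c s l = recd (nat (int (c (jidx c s)) + l)) (core c s)"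

end

theory Submission imports Defs begin

text \<open>Read a diagram through its columns: its size is the sum of the column lengths and twice
  its content is the sum of 2 j x - x^2 - x over the columns, x being the length of column j.
  Passing from \<tau> to the core removes column d = j_s, of length a, and lengthens each of the
  d - 1 columns before it by one; rec then inserts a column of length L = a + l at a position
  k \<le> d and shortens each column before it by one. Tracking these columnwise changes gives
  |\<mu>| - |\<tau>| = d - k + l > 0, and, since s = |\<tau>| - 1 + d - a, the identity
  2 (f \<mu> - f \<tau>) = 2 s (|\<mu>| - |\<tau>|) is a polynomial identity in |\<tau>|, a, d, k, l.\<close>

lemma young_antimono:
  assumes "young c" "1 \<le> i" "i \<le> j"
  shows "c j \<le> c i"
  using assms(3,2)
proof (induction j rule: dec_induct)
  case (step n)
  then show ?case using assms(1) unfolding young_def by (metis le_trans)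
qed simp

text \<open>Twice the content of a column of length x in position j.\<close>
definition column_content :: "nat \<Rightarrow> nat \<Rightarrow> int" where
  "column_content x j = 2 * int j * int x - int x ^ 2 - int x"

lemma sum_double_content_column:
  "(\<Sum>i\<in>{1..x}. 2 * (int j - int i)) = column_content x j"
  unfolding column_content_def by (induction x) (auto simp: power2_eq_square algebra_simps)

lemma column_content_0 [simp]: "column_content 0 j = 0"
  by (simp add: column_content_def)

lemma column_content_Suc:
  "column_content (Suc x) j = column_content x j + 2 * int j - 2 * int x - 2"
  by (simp add: column_content_def power2_eq_square algebra_simps)

lemma column_content_Suc_column:
  "column_content x (Suc j) = column_content x j + 2 * int x"
  by (simp add: column_content_def algebra_simps)

lemma sum_double_atLeastLessThan: "(\<Sum>j\<in>{1..<d}. 2 * int j) = int d * (int d - 1)"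
proof (induction d)
  case (Suc d)
  then show ?case by (cases "d = 0") (auto simp: sum.atLeastLessThan_Suc algebra_simps)
qed simp

lemma cells_eq_columns:
  assumes "\<forall>j>M. c j = 0"
  shows "cells c = (\<lambda>(j, i). (i, j)) ` (SIGMA j:{1..M}. {1..c j})"
proof -
  have "j \<le> M" if "(i, j) \<in> cells c" for i j
    using assms that unfolding cells_def by (cases "j \<le> M") auto
  then show ?thesis unfolding cells_def by (auto simp: image_def)
qed

lemma ysize_eq_sum:
  assumes "\<forall>j>M. c j = 0"
  shows "int (ysize c) = (\<Sum>j\<in>{1..M}. int (c j))"
proof -
  have "ysize c = card (SIGMA j:{1..M}. {1..c j})"
    unfolding ysize_def cells_eq_columns[OF assms] by (rule card_image[OF swap_inj_on])
  then show ?thesis by simp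
qed

lemma double_content_eq_sum:
  assumes "\<forall>j>M. c j = 0"
  shows "2 * content c = (\<Sum>j\<in>{1..M}. column_content (c j) j)"
proof -
  have "content c = (\<Sum>(j, i)\<in>(SIGMA j:{1..M}. {1..c j}). int j - int i)"
    unfolding content_def cells_eq_columns[OF assms]
    by (subst sum.reindex[OF swap_inj_on]) (simp add: case_prod_unfold)
  also have "\<dots> = (\<Sum>j\<in>{1..M}. \<Sum>i\<in>{1..c j}. int j - int i)"
    by (subst sum.Sigma) auto
  finally have "2 * content c = (\<Sum>j\<in>{1..M}. \<Sum>i\<in>{1..c j}. 2 * (int j - int i))"
    by (simp add: sum_distrib_left)
  then show ?thesis by (simp only: sum_double_content_column)
qed

lemma double_fval: "2 * fval c = int (ysize c) ^ 2 - int (ysize c) + 2 * content c"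
proof -
  have "even (int (ysize c) ^ 2 - int (ysize c))"
    by (simp add: power2_eq_square)
  then show ?thesis unfolding fval_def by simp
qed

lemma jidx_eq:
  assumes "young c" "1 \<le> j"
  shows "jidx c (int (ysize c) - 1 + int j - int (c j)) = j"
  unfolding jidx_def
proof (rule the_equality)
  fix j' assume j': "1 \<le> j' \<and> int (ysize c) - 1 + int j - int (c j) = int (ysize c) - 1 + int j' - int (c j')"
  have "int i - int (c i) < int i' - int (c i')" if "1 \<le> i" "i < i'" for i i'
    using young_antimono[OF assms(1) that(1), of i'] that by linarith
  from this[of j j'] this[of j' j] show "j' = j"
    using assms(2) j' by (cases j j' rule: linorder_cases) auto
qed (use assms in simp)

lemma core_support:
  assumes "\<forall>j>N. c j = 0"
  shows "\<forall>j>N + jidx c s. core c s j = 0"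
  using assms unfolding core_def by auto

lemma young_core:
  assumes "young c"
  shows "young (core c s)"
proof -
  obtain N where N: "\<forall>j>N. c j = 0" using assms unfolding young_def by blast
  have "core c s (Suc j) \<le> core c s j" if "j \<ge> 1" for j
    using that young_antimono[OF assms, of j "Suc (Suc j)"] young_antimono[OF assms, of j "Suc j"]
      young_antimono[OF assms, of "Suc j" "Suc (Suc j)"]
    unfolding core_def by auto
  with core_support[OF N] show ?thesis unfolding young_def by blast
qed

lemma sum_split_at:
  fixes d M :: nat
  assumes "1 \<le> d" "d \<le> M"
  shows "(\<Sum>j\<in>{1..M}. g j) = (\<Sum>j\<in>{1..<d}. g j) + g d + (\<Sum>j\<in>{d<..M}. g j)"
proof -
  have split: "{1..M} = {1..<d} \<union> insert d {d<..M}" using assms by auto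
  show ?thesis unfolding split by (subst sum.union_disjoint) (auto simp: add.assoc)
qed

lemma sum_core_columns:
  assumes zero: "\<forall>j>M. c j = 0" and d: "1 \<le> jidx c s" "jidx c s \<le> M" and G: "\<And>j. G 0 j = 0"
  shows "(\<Sum>j\<in>{1..M}. G (core c s j) j)
       = (\<Sum>j\<in>{1..<jidx c s}. G (c j + 1) j) + (\<Sum>j\<in>{jidx c s<..M}. G (c j) (j - 1))"
proof -
  define d where "d = jidx c s"
  have split: "{1..M} = {1..<d} \<union> {d..M}" using d unfolding d_def by auto
  have "(\<Sum>j\<in>{1..M}. G (core c s j) j)
      = (\<Sum>j\<in>{1..<d}. G (core c s j) j) + (\<Sum>j\<in>{d..M}. G (core c s j) j)"
    unfolding split by (rule sum.union_disjoint) auto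
  also have "(\<Sum>j\<in>{1..<d}. G (core c s j) j) = (\<Sum>j\<in>{1..<d}. G (c j + 1) j)"
    by (rule sum.cong) (auto simp: core_def d_def)
  also have "(\<Sum>j\<in>{d..M}. G (core c s j) j) = (\<Sum>j\<in>{d..M}. G (c (Suc j)) j)"
    using d by (intro sum.cong) (auto simp: core_def d_def)
  also have "\<dots> = (\<Sum>j\<in>{Suc d..Suc M}. G (c j) (j - 1))"
    by (subst sum.shift_bounds_cl_Suc_ivl) simp
  also have "\<dots> = (\<Sum>j\<in>{Suc d..M}. G (c j) (j - 1))"
    using d zero G by (simp add: sum.cl_ivl_Suc d_def)
  also have "{Suc d..M} = {d<..M}" by auto
  finally show ?thesis unfolding d_def .
qed


lemma ysize_core:
  assumes zero: "\<forall>j>N. c j = 0" and d: "1 \<le> jidx c s"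
  defines "d \<equiv> jidx c s"
  shows "int (ysize (core c s)) = int (ysize c) - int (c d) + int d - 1"
proof -
  define M where "M = N + d"
  have czero: "\<forall>j>M. c j = 0" using zero unfolding M_def by auto
  note ezero = core_support[OF zero, of s, folded d_def M_def]
  have dM: "d \<le> M" unfolding M_def by simp
  have "int (ysize (core c s)) = (\<Sum>j\<in>{1..<d}. int (c j) + 1) + (\<Sum>j\<in>{d<..M}. int (c j))"
    unfolding ysize_eq_sum[OF ezero]
    using sum_core_columns[OF czero d dM[unfolded d_def], of "\<lambda>x j. int x"] by (simp add: d_def add.commute)
  also have "\<dots> = (\<Sum>j\<in>{1..<d}. int (c j)) + (int d - 1) + (\<Sum>j\<in>{d<..M}. int (c j))"
    using d by (simp add: sum.distrib d_def)
  moreover have "int (ysize c) = (\<Sum>j\<in>{1..<d}. int (c j)) + int (c d) + (\<Sum>j\<in>{d<..M}. int (c j))"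
    unfolding ysize_eq_sum[OF czero] using sum_split_at[OF d[folded d_def] dM] .
  ultimately show ?thesis by simp
qed

lemma double_content_core:
  assumes zero: "\<forall>j>N. c j = 0" and d: "1 \<le> jidx c s"
  defines "d \<equiv> jidx c s"
  shows "2 * content (core c s) = 2 * content c - column_content (c d) d
           + (int d - 1) * (int d - 2) - 2 * (int (ysize c) - int (c d))"
proof -
  define M where "M = N + d"
  have czero: "\<forall>j>M. c j = 0" using zero unfolding M_def by auto
  note ezero = core_support[OF zero, of s, folded d_def M_def]
  have dM: "d \<le> M" unfolding M_def by simp
  define A where "A = (\<Sum>j\<in>{1..<d}. int (c j))"
  define B where "B = (\<Sum>j\<in>{d<..M}. int (c j))"
  define P where "P = (\<Sum>j\<in>{1..<d}. column_content (c j) j)"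
  define Q where "Q = (\<Sum>j\<in>{d<..M}. column_content (c j) j)"
  have "2 * content (core c s)
      = (\<Sum>j\<in>{1..<d}. column_content (Suc (c j)) j) + (\<Sum>j\<in>{d<..M}. column_content (c j) (j - 1))"
    unfolding double_content_eq_sum[OF ezero]
    using sum_core_columns[OF czero d dM[unfolded d_def], of column_content] by (simp add: d_def)
  also have "(\<Sum>j\<in>{1..<d}. column_content (Suc (c j)) j)
      = (\<Sum>j\<in>{1..<d}. column_content (c j) j + 2 * int j - 2 * int (c j) - 2)"
    by (simp add: column_content_Suc)
  also have "\<dots> = P + int d * (int d - 1) - 2 * A - 2 * (int d - 1)"
    using d unfolding P_def A_def d_def sum_double_atLeastLessThan[symmetric] sum_subtractf sum.distrib
      sum_distrib_left by simp
  also have "(\<Sum>j\<in>{d<..M}. column_content (c j) (j - 1)) = (\<Sum>j\<in>{d<..M}. column_content (c j) j - 2 * int (c j))"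
    by (rule sum.cong) (use d in \<open>auto simp: d_def column_content_def of_nat_diff algebra_simps\<close>)
  also have "\<dots> = Q - 2 * B" unfolding Q_def B_def sum_subtractf sum_distrib_left ..
  finally have "2 * content (core c s) = P + int d * (int d - 1) - 2 * A - 2 * (int d - 1) + (Q - 2 * B)" .
  moreover have "2 * content c = P + column_content (c d) d + Q"
    unfolding double_content_eq_sum[OF czero] P_def Q_def using sum_split_at[OF d[folded d_def] dM] .
  moreover have "int (ysize c) = A + int (c d) + B"
    unfolding ysize_eq_sum[OF czero] A_def B_def using sum_split_at[OF d[folded d_def] dM] .
  ultimately show ?thesis by (simp add: algebra_simps)
qed

lemma sum_recd_columns:
  assumes k: "1 \<le> rec_idx L e" "rec_idx L e \<le> M"
  defines "k \<equiv> rec_idx L e"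
  shows "(\<Sum>j\<in>{1..M}. G (recd L e j) j)
       = (\<Sum>j\<in>{1..<k}. G (e j - 1) j) + G L k + (\<Sum>j\<in>{k..<M}. G (e j) (Suc j))"
proof -
  have split: "{1..M} = {1..<k} \<union> insert k {k<..M}" using k unfolding k_def by auto
  have "(\<Sum>j\<in>{1..M}. G (recd L e j) j)
      = (\<Sum>j\<in>{1..<k}. G (recd L e j) j) + G L k + (\<Sum>j\<in>{k<..M}. G (recd L e j) j)"
    unfolding split using k by (subst sum.union_disjoint) (auto simp: add.assoc recd_def k_def)
  also have "(\<Sum>j\<in>{1..<k}. G (recd L e j) j) = (\<Sum>j\<in>{1..<k}. G (e j - 1) j)"
    by (rule sum.cong) (auto simp: recd_def k_def)
  also have "(\<Sum>j\<in>{k<..M}. G (recd L e j) j) = (\<Sum>j\<in>Suc ` {k..<M}. G (e (j - 1)) j)"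
    by (rule sum.cong) (auto simp: recd_def k_def image_Suc_atLeastLessThan)
  also have "\<dots> = (\<Sum>j\<in>{k..<M}. G (e j) (Suc j))"
    by (subst sum.reindex) auto
  finally show ?thesis .
qed

lemma recd_support:
  assumes "\<forall>j>N. e j = 0"
  shows "\<forall>j>Suc (N + rec_idx L e). recd L e j = 0"
  using assms unfolding recd_def by auto

lemma sum_split_before:
  assumes "1 \<le> k" "k \<le> Suc M"
  shows "(\<Sum>j\<in>{1..M}. g j) = (\<Sum>j\<in>{1..<k}. g j) + (\<Sum>j\<in>{k..<Suc M}. g j)"
  using assms by (simp only: sum.atLeastLessThan_concat atLeastLessThanSuc_atLeastAtMost[symmetric])

lemma ysize_recd:
  assumes zero: "\<forall>j>N. e j = 0" and k: "1 \<le> rec_idx L e"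
    and pos: "\<And>j. 1 \<le> j \<Longrightarrow> j < rec_idx L e \<Longrightarrow> 1 \<le> e j"
  defines "k \<equiv> rec_idx L e"
  shows "int (ysize (recd L e)) = int (ysize e) - (int k - 1) + int L"
proof -
  define M where "M = Suc (N + k)"
  have ezero: "\<forall>j>N + k. e j = 0" using zero by auto
  have rzero: "\<forall>j>M. recd L e j = 0" using recd_support[OF zero, of L] unfolding M_def k_def .
  have kM: "k \<le> M" unfolding M_def by simp
  have "int (ysize (recd L e)) = (\<Sum>j\<in>{1..<k}. int (e j - 1)) + int L + (\<Sum>j\<in>{k..<M}. int (e j))"
    unfolding ysize_eq_sum[OF rzero] using sum_recd_columns[OF k kM[unfolded k_def], of "\<lambda>x j. int x"]
    by (simp add: k_def)
  also have "(\<Sum>j\<in>{1..<k}. int (e j - 1)) = (\<Sum>j\<in>{1..<k}. int (e j)) - (int k - 1)"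
    using k pos by (simp add: k_def of_nat_diff sum_subtractf)
  finally have "int (ysize (recd L e))
      = (\<Sum>j\<in>{1..<k}. int (e j)) - (int k - 1) + int L + (\<Sum>j\<in>{k..<M}. int (e j))" .
  moreover have "int (ysize e) = (\<Sum>j\<in>{1..<k}. int (e j)) + (\<Sum>j\<in>{k..<M}. int (e j))"
    unfolding ysize_eq_sum[OF ezero] M_def by (rule sum_split_before) (use k in \<open>simp_all add: k_def\<close>)
  ultimately show ?thesis by linarith
qed

lemma double_content_recd:
  assumes zero: "\<forall>j>N. e j = 0" and k: "1 \<le> rec_idx L e"
    and pos: "\<And>j. 1 \<le> j \<Longrightarrow> j < rec_idx L e \<Longrightarrow> 1 \<le> e j"
  defines "k \<equiv> rec_idx L e"
  shows "2 * content (recd L e)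
           = 2 * content e - int k * (int k - 1) + 2 * int (ysize e) + column_content L k"
proof -
  define M where "M = Suc (N + k)"
  have ezero: "\<forall>j>N + k. e j = 0" using zero by auto
  have rzero: "\<forall>j>M. recd L e j = 0" using recd_support[OF zero, of L] unfolding M_def k_def .
  have kM: "k \<le> M" unfolding M_def by simp
  define A where "A = (\<Sum>j\<in>{1..<k}. int (e j))"
  define B where "B = (\<Sum>j\<in>{k..<M}. int (e j))"
  define P where "P = (\<Sum>j\<in>{1..<k}. column_content (e j) j)"
  define Q where "Q = (\<Sum>j\<in>{k..<M}. column_content (e j) j)"
  have "2 * content (recd L e) = (\<Sum>j\<in>{1..<k}. column_content (e j - 1) j) + column_content L k
                                   + (\<Sum>j\<in>{k..<M}. column_content (e j) (Suc j))"
    unfolding double_content_eq_sum[OF rzero]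
    using sum_recd_columns[OF k kM[unfolded k_def], of column_content] by (simp add: k_def)
  also have "(\<Sum>j\<in>{1..<k}. column_content (e j - 1) j)
      = (\<Sum>j\<in>{1..<k}. column_content (e j) j - 2 * int j + 2 * int (e j))"
  proof (rule sum.cong)
    fix j assume "j \<in> {1..<k}"
    then have "e j = Suc (e j - 1)" using pos unfolding k_def by fastforce
    then show "column_content (e j - 1) j = column_content (e j) j - 2 * int j + 2 * int (e j)"
      using column_content_Suc[of "e j - 1" j] by simp
  qed simp
  also have "\<dots> = P - int k * (int k - 1) + 2 * A"
    unfolding P_def A_def sum_double_atLeastLessThan[symmetric] sum_subtractf sum.distrib
      sum_distrib_left by simp
  also have "(\<Sum>j\<in>{k..<M}. column_content (e j) (Suc j)) = Q + 2 * B"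
    unfolding Q_def B_def column_content_Suc_column sum.distrib sum_distrib_left ..
  finally have "2 * content (recd L e) = P - int k * (int k - 1) + 2 * A + column_content L k + (Q + 2 * B)" .
  moreover have "2 * content e = P + Q"
    unfolding double_content_eq_sum[OF ezero] M_def P_def Q_def
    by (rule sum_split_before) (use k in \<open>simp_all add: k_def\<close>)
  moreover have "int (ysize e) = A + B"
    unfolding ysize_eq_sum[OF ezero] M_def A_def B_def by (rule sum_split_before) (use k in \<open>simp_all add: k_def\<close>)
  ultimately show ?thesis by (simp add: algebra_simps)
qed

lemma rec_idx_bounds:
  assumes "young e" "1 \<le> z" "e z \<le> L"
  shows "1 \<le> rec_idx L e" "rec_idx L e \<le> z" "\<And>j. 1 \<le> j \<Longrightarrow> j < rec_idx L e \<Longrightarrow> L < e j"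
proof -
  define k where "k = (LEAST k. 1 \<le> k \<and> e k \<le> L)"
  have k: "1 \<le> k" "e k \<le> L" unfolding k_def by (rule LeastI2[of _ z], use assms in auto)+
  have below: "L < e j" if "1 \<le> j" "j < k" for j
    using not_less_Least[of j "\<lambda>k. 1 \<le> k \<and> e k \<le> L"] that unfolding k_def by auto
  have "rec_idx L e = k" unfolding rec_idx_def
  proof (rule the_equality)
    show "1 \<le> k \<and> (k = 1 \<or> L + 1 \<le> e (k - 1)) \<and> e k < L + 1"
      using k below[of "k - 1"] by (cases "k = 1") (auto simp: Suc_le_eq)
  next
    fix k' assume k': "1 \<le> k' \<and> (k' = 1 \<or> L + 1 \<le> e (k' - 1)) \<and> e k' < L + 1"
    have "k' \<le> k"
    proof (rule ccontr)
      assume "\<not> k' \<le> k"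
      then have "k \<le> k' - 1" "k' \<noteq> 1" using k(1) by auto
      then have "e (k' - 1) \<le> e k" using young_antimono[OF assms(1) k(1)] by blast
      then show False using k k' \<open>k' \<noteq> 1\<close> by auto
    qed
    moreover have "\<not> k' < k" using below[of k'] k' by auto
    ultimately show "k' = k" by simp
  qed
  then show "1 \<le> rec_idx L e" "\<And>j. 1 \<le> j \<Longrightarrow> j < rec_idx L e \<Longrightarrow> L < e j"
    using k below by auto
  show "rec_idx L e \<le> z"
    unfolding \<open>rec_idx L e = k\<close> k_def using assms(2,3) by (simp add: Least_le)
qed

lemma Gamma_ysize_fval:
  assumes young: "young \<tau>" and l: "0 < l" and s: "s \<in> Cset \<tau>"
  defines "D \<equiv> int (ysize (Gamma \<tau> s l)) - int (ysize \<tau>)"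
  shows "0 < D \<and> fval (Gamma \<tau> s l) - fval \<tau> = s * D"
proof -
  obtain N where N: "\<forall>j>N. \<tau> j = 0" using young unfolding young_def by blast
  obtain d where d: "1 \<le> d" and sd: "s = int (ysize \<tau>) - 1 + int d - int (\<tau> d)"
    using s unfolding Cset_def by blast
  have jidx: "jidx \<tau> s = d" unfolding sd using jidx_eq[OF young d] .
  define \<eta> where "\<eta> = core \<tau> s"
  define L where "L = nat (int (\<tau> d) + l)"
  define k where "k = rec_idx L \<eta>"
  have Gamma: "Gamma \<tau> s l = recd L \<eta>" unfolding Gamma_def L_def \<eta>_def jidx ..
  have L: "int L = int (\<tau> d) + l" unfolding L_def using l by simp
  have "\<eta> d \<le> L" using young_antimono[OF young d, of "Suc d"] L l unfolding \<eta>_def core_def jidx by simp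
  note k_bounds = rec_idx_bounds[OF young_core[OF young, of s, folded \<eta>_def] d this]
  have \<eta>_pos: "1 \<le> \<eta> j" if "1 \<le> j" "j < rec_idx L \<eta>" for j
    using k_bounds(3)[OF that] by simp
  note \<eta>_zero = core_support[OF N, of s, folded \<eta>_def]
  have size_\<eta>: "int (ysize \<eta>) = int (ysize \<tau>) - int (\<tau> d) + int d - 1"
    using ysize_core[OF N, of s] unfolding jidx \<eta>_def using d by simp
  have content_\<eta>: "2 * content \<eta> = 2 * content \<tau> - column_content (\<tau> d) d
      + (int d - 1) * (int d - 2) - 2 * (int (ysize \<tau>) - int (\<tau> d))"
    using double_content_core[OF N, of s] unfolding jidx \<eta>_def using d by simp
  have size_\<mu>: "int (ysize (recd L \<eta>)) = int (ysize \<eta>) - (int k - 1) + int L"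
    using ysize_recd[OF \<eta>_zero k_bounds(1) \<eta>_pos] unfolding k_def .
  have content_\<mu>: "2 * content (recd L \<eta>)
      = 2 * content \<eta> - int k * (int k - 1) + 2 * int (ysize \<eta>) + column_content L k"
    using double_content_recd[OF \<eta>_zero k_bounds(1) \<eta>_pos] unfolding k_def .
  have D: "D = int d - int k + l"
    unfolding D_def Gamma size_\<mu> size_\<eta> L by simp
  have size_\<mu>': "int (ysize (recd L \<eta>)) = int (ysize \<tau>) + D"
    unfolding D_def Gamma by simp
  have "2 * (fval (recd L \<eta>) - fval \<tau>) = 2 * (s * D)"
    unfolding right_diff_distrib double_fval content_\<mu> size_\<mu>'
    unfolding content_\<eta> size_\<eta> D sd
    by (simp add: L power2_eq_square algebra_simps column_content_def)
  then show ?thesis using D k_bounds(2) l unfolding Gamma k_def by simp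
qed

theorem mainTheorem10:
  fixes \<tau> :: "nat \<Rightarrow> nat" and s l :: int
  assumes "young \<tau>" and "0 < l" and "s \<in> Cset \<tau>"
  shows "int (ysize (Gamma \<tau> s l)) - int (ysize \<tau>) > 0 \<and>
         real_of_int s = real_of_int (fval (Gamma \<tau> s l) - fval \<tau>)
                          / real_of_int (int (ysize (Gamma \<tau> s l)) - int (ysize \<tau>))"
  using Gamma_ysize_fval[OF assms] by simp

end
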